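(* Let $m\geq 1$, $a\ge 1$ and $n,p>1$ be integers, and let $G$ be an $r$-regular graph of order $m$. If $n\equiv 0\pmod 2$ or $apm\equiv 1\pmod 2$, then $G\circ aH_{n,p}$ is distance magic.
   Context: A graph $G$ on $v$ vertices is distance magic if there is a bijection $f:V(G)\to\{1,\ldots,v\}$ and a constant $k$ such that for every vertex $x$, $\sum_{y\in N(x)}f(y)=k$, where $N(x)$ is the set of neighbours of $x$. $H_{n,p}$ denotes the complete multipartite graph with $p$ partite sets each of size $n$; $aH$ denotes the disjoint union of $a$ copies of $H$. The lexicographic product $G\circ H$ has vertex set $V(G)\times V(H)$, with $(g,h)$ adjacent to $(g',h')$ iff either $gg'\in E(G)$, or $g=g'$ and $hh'\in E(H)$. *)

theory Defs
  imports Main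
begin

definition simple_graph :: "'a set \<Rightarrow> ('a \<Rightarrow> 'a \<Rightarrow> bool) \<Rightarrow> bool" where
  "simple_graph V E \<longleftrightarrow> finite V \<and> (\<forall>x y. E x y \<longrightarrow> x \<in> V \<and> y \<in> V)
     \<and> (\<forall>x y. E x y \<longrightarrow> E y x) \<and> (\<forall>x. \<not> E x x)"

definition nbhd :: "'a set \<Rightarrow> ('a \<Rightarrow> 'a \<Rightarrow> bool) \<Rightarrow> 'a \<Rightarrow> 'a set" where
  "nbhd V E x = {y \<in> V. E x y}"

definition regular :: "'a set \<Rightarrow> ('a \<Rightarrow> 'a \<Rightarrow> bool) \<Rightarrow> nat \<Rightarrow> bool" where
  "regular V E r \<longleftrightarrow> (\<forall>x\<in>V. card (nbhd V E x) = r)"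

definition distance_magic :: "'a set \<Rightarrow> ('a \<Rightarrow> 'a \<Rightarrow> bool) \<Rightarrow> bool" where
  "distance_magic V E \<longleftrightarrow> (\<exists>f k. bij_betw f V {1..card V} \<and>
      (\<forall>x\<in>V. (\<Sum>y\<in>nbhd V E x. f y) = (k::nat)))"

definition lex_verts :: "'a set \<Rightarrow> 'b set \<Rightarrow> ('a \<times> 'b) set" where
  "lex_verts VG VH = VG \<times> VH"

definition lex_adj :: "('a \<Rightarrow> 'a \<Rightarrow> bool) \<Rightarrow> ('b \<Rightarrow> 'b \<Rightarrow> bool) \<Rightarrow> ('a \<times> 'b) \<Rightarrow> ('a \<times> 'b) \<Rightarrow> bool" where
  "lex_adj EG EH u v \<longleftrightarrow> EG (fst u) (fst v) \<or> (fst u = fst v \<and> EH (snd u) (snd v))"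

text \<open>a H_{n,p}: vertices (c, i, j) with copy c < a, part i < p, index j < n;
  two vertices are adjacent iff they are in the same copy and in different parts.\<close>
definition aHnp_verts :: "nat \<Rightarrow> nat \<Rightarrow> nat \<Rightarrow> (nat \<times> nat \<times> nat) set" where
  "aHnp_verts a n p = {0..<a} \<times> {0..<p} \<times> {0..<n}"

definition aHnp_adj :: "nat \<Rightarrow> nat \<Rightarrow> nat \<Rightarrow> (nat \<times> nat \<times> nat) \<Rightarrow> (nat \<times> nat \<times> nat) \<Rightarrow> bool" where
  "aHnp_adj a n p u v \<longleftrightarrow> u \<in> aHnp_verts a n p \<and> v \<in> aHnp_verts a n p
     \<and> fst u = fst v \<and> fst (snd u) \<noteq> fst (snd v)"

end

(* Arrange the vertices of G \<circ> aH_{n,p} as an array whose rows are the parts {g} \<times> {c} \<times> {i} \<times> [n]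
   of the copies of H_{n,p}, and label it bijectively by 1..|V| a p n so that every row has the same
   sum S. A vertex (g, c, i, j) is adjacent to all of {g'} \<times> aH_{n,p} for the r neighbours g' of g and
   to the p - 1 other parts of its own copy, so its neighbourhood sum is r a p S + (p - 1) S.
   Such row-constant labellings of an M \<times> n array exist for even n (glue pairs of columns
   k + 1, 2M - k) and, when M is odd, for odd n \<ge> 3 (glue such pairs to a three-column array). *)

theory Submission
  imports Defs
begin

(* A magic rectangle without the condition on column sums. *)
definition row_magic :: "('a \<times> nat \<Rightarrow> nat) \<Rightarrow> 'a set \<Rightarrow> nat \<Rightarrow> nat \<Rightarrow> bool" where
  "row_magic F P n S \<longleftrightarrow>
     bij_betw F (P \<times> {0..<n}) {1..card P * n} \<and> (\<forall>q\<in>P. (\<Sum>j<n. F (q, j)) = S)"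

lemma bij_betw_if_inj_on_card:
  assumes "inj_on f A" "f ` A \<subseteq> B" "card A = card B" "finite B"
  shows "bij_betw f A B"
  unfolding bij_betw_def using assms by (metis card_image card_subset_eq)

lemma row_magic_append:
  assumes "finite P" and F: "row_magic F P n1 S1" and G: "row_magic G P n2 S2"
  shows "row_magic (\<lambda>(q, j). if j < n1 then F (q, j) else card P * n1 + G (q, j - n1))
           P (n1 + n2) (S1 + n2 * (card P * n1) + S2)"
    (is "row_magic ?H P _ _")
proof -
  let ?M = "card P"
  have Fb: "bij_betw F (P \<times> {0..<n1}) {1..?M * n1}" and Gb: "bij_betw G (P \<times> {0..<n2}) {1..?M * n2}"
    using F G unfolding row_magic_def by auto
  have F_range: "F (q, j) \<in> {1..?M * n1}" if "q \<in> P" "j < n1" for q j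
    using bij_betw_apply[OF Fb] that by auto
  have G_range: "G (q, j - n1) \<in> {1..?M * n2}" if "q \<in> P" "\<not> j < n1" "j < n1 + n2" for q j
    using bij_betw_apply[OF Gb] that by auto
  have "inj_on ?H (P \<times> {0..<n1 + n2})"
  proof (rule inj_onI)
    fix x y assume x: "x \<in> P \<times> {0..<n1 + n2}" and y: "y \<in> P \<times> {0..<n1 + n2}" and eq: "?H x = ?H y"
    obtain q j q' j' where xy: "x = (q, j)" "y = (q', j')"
      by fastforce
    consider "j < n1" "j' < n1" | "\<not> j < n1" "\<not> j' < n1" | "j < n1 \<longleftrightarrow> \<not> j' < n1"
      by blast
    then show "x = y"
    proof cases
      case 1
      then have "(q, j) = (q', j')"
        using eq x y xy by (intro inj_onD[OF bij_betw_imp_inj_on[OF Fb]]) auto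
      then show ?thesis
        using xy by simp
    next
      case 2
      then have "(q, j - n1) = (q', j' - n1)"
        using eq x y xy by (intro inj_onD[OF bij_betw_imp_inj_on[OF Gb]]) auto
      then show ?thesis
        using 2 xy by auto
    next
      case 3
      then show ?thesis
        using eq x y xy F_range[of q j] F_range[of q' j'] G_range[of q j] G_range[of q' j']
        by (auto split: if_splits)
    qed
  qed
  moreover have "?H x \<in> {1..?M * (n1 + n2)}" if "x \<in> P \<times> {0..<n1 + n2}" for x
    using that F_range G_range by (fastforce simp: add_mult_distrib2)
  moreover have "\<forall>q\<in>P. (\<Sum>j<n1 + n2. ?H (q, j)) = S1 + n2 * (?M * n1) + S2"
  proof
    fix q assume "q \<in> P"
    have "(\<Sum>j<n1 + n2. ?H (q, j)) = (\<Sum>j<n1. F (q, j)) + (\<Sum>j<n2. ?M * n1 + G (q, j))"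
      by (induction n2) (auto simp: algebra_simps)
    then show "(\<Sum>j<n1 + n2. ?H (q, j)) = S1 + n2 * (?M * n1) + S2"
      using F G \<open>q \<in> P\<close> unfolding row_magic_def by (simp add: sum.distrib)
  qed
  ultimately show ?thesis
    unfolding row_magic_def
    by (simp add: bij_betw_if_inj_on_card image_subset_iff card_cartesian_product)
qed

lemma row_magic_no_columns: "row_magic (\<lambda>_. 0) P 0 0"
  by (simp add: row_magic_def bij_betw_def)

lemma row_magic_two_columns:
  "row_magic (\<lambda>(k, j). if j = 0 then k + 1 else 2 * M - k) {0..<M} 2 (2 * M + 1)"
  unfolding row_magic_def
  by (auto intro!: bij_betw_if_inj_on_card simp: inj_on_def card_cartesian_product numeral_2_eq_2 split: if_splits)

(* The columns take the values 1..M, M+1..2M and 2M+1..3M; in the last column the rows k \<le> h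
   get the odd values and the others the even ones. *)
lemma row_magic_three_columns:
  assumes "M = 2 * h + 1"
  shows "row_magic
    (\<lambda>(k, j). if j = 0 then k + 1
              else if j = 1 then (if k \<le> h then 3 * h + k + 2 else h + k + 1)
              else if k \<le> h then 6 * h + 3 - 2 * k else 8 * h + 4 - 2 * k)
    {0..<M} 3 (9 * h + 6)"
  unfolding row_magic_def assms
  by (auto intro!: bij_betw_if_inj_on_card simp: inj_on_def card_cartesian_product numeral_3_eq_3 split: if_splits; presburger)

lemma row_magic_reindex:
  assumes "bij_betw \<phi> P Q" and "row_magic F Q n S"
  shows "row_magic (\<lambda>(q, j). F (\<phi> q, j)) P n S"
proof -
  have "bij_betw (map_prod \<phi> id) (P \<times> {0..<n}) (Q \<times> {0..<n})"
    using assms(1) by (intro bij_betw_map_prod bij_betw_id)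
  moreover have "card Q = card P"
    using assms(1) by (simp add: bij_betw_same_card)
  ultimately have "bij_betw (F \<circ> map_prod \<phi> id) (P \<times> {0..<n}) {1..card P * n}"
    using assms(2) unfolding row_magic_def by (metis bij_betw_trans)
  moreover have "F \<circ> map_prod \<phi> id = (\<lambda>(q, j). F (\<phi> q, j))"
    by auto
  ultimately show ?thesis
    using assms bij_betw_apply[OF assms(1)] unfolding row_magic_def by auto
qed

lemma row_magic_even_columns:
  fixes M :: nat
  shows "\<exists>F S. row_magic F {0..<M} (2 * t) S"
proof (induction t)
  case 0
  show ?case using row_magic_no_columns by fastforce
next
  case (Suc t)
  then obtain F S where "row_magic F {0..<M} (2 * t) S"
    by blast
  from row_magic_append[OF _ this row_magic_two_columns] show ?case
    by auto
qed

lemma row_magic_odd_columns: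
  fixes M :: nat
  assumes "odd M"
  shows "\<exists>F S. row_magic F {0..<M} (3 + 2 * t) S"
proof -
  obtain h where "M = 2 * h + 1"
    using assms oddE by blast
  moreover obtain F S where "row_magic F {0..<M} (2 * t) S"
    using row_magic_even_columns by blast
  ultimately show ?thesis
    using row_magic_append[OF _ row_magic_three_columns] by blast
qed

lemma exists_row_magic:
  assumes "finite P" and "even n \<or> odd (card P) \<and> n > 1"
  shows "\<exists>F S. row_magic F P n S"
proof -
  have "\<exists>F S. row_magic F {0..<card P} n S"
  proof (cases "even n")
    case True
    then show ?thesis using row_magic_even_columns by (metis evenE)
  next
    case False
    with assms(2) have "odd (card P)" and "n = 3 + 2 * ((n - 3) div 2)"
      by presburger+
    then show ?thesis using row_magic_odd_columns by metis
  qed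
  moreover obtain \<phi> where "bij_betw \<phi> P {0..<card P}"
    using ex_bij_betw_finite_nat[OF assms(1)] by blast
  ultimately show ?thesis
    using row_magic_reindex by blast
qed


lemma nbhd_lex:
  assumes "simple_graph V E" and "g \<in> V"
  shows "nbhd (lex_verts V VH) (lex_adj E EH) (g, w) = nbhd V E g \<times> VH \<union> {g} \<times> nbhd VH EH w"
  using assms unfolding simple_graph_def nbhd_def lex_verts_def lex_adj_def by auto

lemma sum_nbhd_lex:
  assumes G: "simple_graph V E" and "regular V E r" and "finite VH" and "g \<in> V"
    and T: "\<forall>g'\<in>V. (\<Sum>z\<in>VH. f (g', z)) = T"
    and K: "(\<Sum>z\<in>nbhd VH EH w. f (g, z)) = K"
  shows "(\<Sum>y\<in>nbhd (lex_verts V VH) (lex_adj E EH) (g, w). f y) = r * T + K"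
proof -
  let ?N = "nbhd V E g"
  have N: "?N \<subseteq> V" "finite ?N" "card ?N = r" "g \<notin> ?N"
    using G assms(2,4) finite_subset
    unfolding simple_graph_def regular_def nbhd_def by auto
  have "(\<Sum>y\<in>?N \<times> VH. f y) = (\<Sum>g'\<in>?N. \<Sum>z\<in>VH. f (g', z))"
    by (simp add: sum.cartesian_product)
  also have "\<dots> = r * T"
    using N T by (simp add: subset_eq)
  finally have "(\<Sum>y\<in>?N \<times> VH. f y) = r * T" .
  moreover have "(\<Sum>y\<in>{g} \<times> nbhd VH EH w. f y) = K"
    using K by (simp add: Sigma_def sum.reindex inj_on_def UNION_singleton_eq_range)
  moreover have "finite (nbhd VH EH w)"
    using \<open>finite VH\<close> by (simp add: nbhd_def)
  ultimately show ?thesis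
    using N \<open>finite VH\<close> unfolding nbhd_lex[OF G \<open>g \<in> V\<close>]
    by (subst sum.union_disjoint) auto
qed

lemma nbhd_aHnp:
  assumes "(c, i, j) \<in> aHnp_verts a n p"
  shows "nbhd (aHnp_verts a n p) (aHnp_adj a n p) (c, i, j) = {c} \<times> ({0..<p} - {i}) \<times> {0..<n}"
  using assms unfolding nbhd_def aHnp_adj_def aHnp_verts_def by auto

lemma sum_aHnp_parts:
  fixes a n p :: nat
  assumes "\<forall>c<a. \<forall>i<p. (\<Sum>j<n. h (c, i, j)) = S" and "C \<subseteq> {0..<a}" and "I \<subseteq> {0..<p}"
  shows "(\<Sum>z\<in>C \<times> I \<times> {0..<n}. h z) = card C * card I * S"
proof -
  have "(\<Sum>z\<in>C \<times> I \<times> {0..<n}. h z) = (\<Sum>c\<in>C. \<Sum>i\<in>I. \<Sum>j\<in>{0..<n}. h (c, i, j))"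
    by (simp add: sum.cartesian_product)
  also have "\<dots> = (\<Sum>c\<in>C. \<Sum>i\<in>I. S)"
    using assms by (intro sum.cong) (auto simp: atLeast0LessThan)
  finally show ?thesis by simp
qed

lemma sum_aHnp_verts:
  assumes "\<forall>c<a. \<forall>i<p. (\<Sum>j<n. h (c, i, j)) = S"
  shows "(\<Sum>z\<in>aHnp_verts a n p. h z) = a * p * S"
  using sum_aHnp_parts[OF assms order_refl order_refl] by (simp add: aHnp_verts_def)

lemma sum_nbhd_aHnp:
  assumes "\<forall>c<a. \<forall>i<p. (\<Sum>j<n. h (c, i, j)) = S" and "x \<in> aHnp_verts a n p"
  shows "(\<Sum>z\<in>nbhd (aHnp_verts a n p) (aHnp_adj a n p) x. h z) = (p - 1) * S"
proof -
  obtain c i j where x: "x = (c, i, j)" and "c < a" "i < p"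
    using assms(2) by (auto simp: aHnp_verts_def)
  then show ?thesis
    using sum_aHnp_parts[OF assms(1), of "{c}" "{0..<p} - {i}"] assms(2)
    by (simp add: nbhd_aHnp)
qed

lemma sum_nbhd_lex_aHnp:
  assumes "simple_graph V E" and "regular V E r"
    and parts: "\<forall>g\<in>V. \<forall>c<a. \<forall>i<p. (\<Sum>j<n. f (g, c, i, j)) = S"
    and "x \<in> lex_verts V (aHnp_verts a n p)"
  shows "(\<Sum>y\<in>nbhd (lex_verts V (aHnp_verts a n p)) (lex_adj E (aHnp_adj a n p)) x. f y)
           = r * (a * p * S) + (p - 1) * S"
proof -
  let ?H = "aHnp_verts a n p"
  obtain g w where x: "x = (g, w)" and "g \<in> V" "w \<in> ?H"
    using assms(4) unfolding lex_verts_def by blast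
  have T: "\<forall>g'\<in>V. (\<Sum>z\<in>?H. f (g', z)) = a * p * S"
    using parts sum_aHnp_verts[where h = "\<lambda>z. f (_, z)"] by blast
  have K: "(\<Sum>z\<in>nbhd ?H (aHnp_adj a n p) w. f (g, z)) = (p - 1) * S"
    using parts \<open>g \<in> V\<close> \<open>w \<in> ?H\<close> sum_nbhd_aHnp[where h = "\<lambda>z. f (g, z)"] by blast
  have "finite ?H"
    by (simp add: aHnp_verts_def)
  from sum_nbhd_lex[OF assms(1,2) this \<open>g \<in> V\<close> T K] show ?thesis
    unfolding x .
qed

lemma distance_magic_lex_aHnp_if_row_magic:
  assumes "simple_graph V E" and "regular V E r" and F: "row_magic F (V \<times> {0..<a} \<times> {0..<p}) n S"
  shows "distance_magic (lex_verts V (aHnp_verts a n p)) (lex_adj E (aHnp_adj a n p))"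
proof -
  let ?W = "lex_verts V (aHnp_verts a n p)"
  define \<rho> :: "'a \<times> nat \<times> nat \<times> nat \<Rightarrow> ('a \<times> nat \<times> nat) \<times> nat"
    where "\<rho> = (\<lambda>(g, c, i, j). ((g, c, i), j))"
  have \<rho>: "bij_betw \<rho> ?W ((V \<times> {0..<a} \<times> {0..<p}) \<times> {0..<n})"
    unfolding \<rho>_def
    by (rule bij_betw_byWitness[where f' = "\<lambda>((g, c, i), j). (g, c, i, j)"])
      (auto simp: lex_verts_def aHnp_verts_def)
  then have "card ?W = card (V \<times> {0..<a} \<times> {0..<p}) * n"
    by (simp add: bij_betw_same_card card_cartesian_product)
  with F \<rho> have "bij_betw (F \<circ> \<rho>) ?W {1..card ?W}"
    unfolding row_magic_def by (simp add: bij_betw_trans)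
  moreover have "\<forall>g\<in>V. \<forall>c<a. \<forall>i<p. (\<Sum>j<n. (F \<circ> \<rho>) (g, c, i, j)) = S"
    using F unfolding row_magic_def \<rho>_def by auto
  ultimately show ?thesis
    unfolding distance_magic_def using sum_nbhd_lex_aHnp[OF assms(1,2)] by blast
qed

theorem theorem12:
  fixes V :: "'a set" and E :: "'a \<Rightarrow> 'a \<Rightarrow> bool" and m r a n p :: nat
  assumes "simple_graph V E" and "card V = m" and "regular V E r"
    and "m \<ge> 1" and "a \<ge> 1" and "n > 1" and "p > 1"
    and "even n \<or> odd (a * p * m)"
  shows "distance_magic (lex_verts V (aHnp_verts a n p)) (lex_adj E (aHnp_adj a n p))"
proof -
  let ?P = "V \<times> {0..<a} \<times> {0..<p}"
  have "finite ?P"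
    using assms(1) by (simp add: simple_graph_def)
  moreover have "card ?P = a * p * m"
    using assms(2) by (simp add: card_cartesian_product)
  ultimately obtain F S where "row_magic F ?P n S"
    using exists_row_magic[of ?P n] assms(6,8) by auto
  then show ?thesis
    using distance_magic_lex_aHnp_if_row_magic[OF assms(1,3)] by blast
qed

end
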